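(* Fix $\lambda\in\mathbb{R}^m$ and $\beta>0$, and let $\theta\mapsto\pi_\theta$ be a differentiable policy parameterization. Then $$\nabla_\theta\mathcal{L}^\beta(\pi_\theta,\lambda)=\sum_{s\in\mathcal{S}}\frac{d^{\pi_\theta}(s)}{1-\gamma}\sum_{a\in\mathcal{A}}Q^{\pi_\theta}_{\Gamma(\pi_\theta)}(s,a)\,\frac{\partial\pi_\theta(a\mid s)}{\partial\theta},$$ where $\Gamma(\pi)=r-\beta\sum_{i=1}^m c_i\min\{V^\pi_{c_i}(\rho)-b_i-\lambda_i/\beta,0\}$ and $Q^\pi_{\Gamma(\pi)}$ is the state-action value function for the (fixed) reward function $\Gamma(\pi)$.
   Context: CMDP: finite $\mathcal{S}$, $\mathcal{A}$; transition kernel $\mathcal{P}$; initial distribution $\rho$; discount $\gamma\in[0,1)$; reward $r:\mathcal{S}\times\mathcal{A}\to[0,1]$; constraint rewards $c_i:\mathcal{S}\times\mathcal{A}\to[0,1]$, thresholds $b_i\ge0$, $i\in[m]$. For bounded $u$, $Q^\pi_u(s,a)=\mathbb{E}[\sum_{\tau\ge0}\gamma^\tau u(s_\tau,a_\tau)\mid s_0=s,a_0=a]$ under $\mathcal{P}$ and $\pi$, $V^\pi_u(s)=\sum_a\pi(a\mid s)Q^\pi_u(s,a)$, $V^\pi_u(\rho)=\sum_s\rho(s)V^\pi_u(s)$. Discounted state visitation distribution: $d^\pi(s)=(1-\gamma)\sum_{s_0}\rho(s_0)\sum_{\tau\ge0}\gamma^\tau\Pr^\pi[s_\tau=s\mid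 s_0]$. Augmented Lagrangian: $\mathcal{L}^\beta(\pi,\lambda)=V^\pi_r(\rho)+\frac{\beta}{2}\sum_i\big(-\min\{V^\pi_{c_i}(\rho)-b_i-\lambda_i/\beta,0\}^2+\lambda_i^2/\beta^2\big)$. *)

theory Defs
  imports "HOL-Analysis.Analysis"
begin

text \<open>Finite CMDP with state type 's and action type 'a (both finite).
  Transition kernel P s a s' = probability of s' after (s,a); policy pol s a = pol(a|s).\<close>

definition is_kernel :: "('s::finite \<Rightarrow> 'a::finite \<Rightarrow> 's \<Rightarrow> real) \<Rightarrow> bool" where
  "is_kernel P \<longleftrightarrow> (\<forall>s a s'. P s a s' \<ge> 0) \<and> (\<forall>s a. (\<Sum>s'\<in>UNIV. P s a s') = 1)"

definition is_distr :: "('s::finite \<Rightarrow> real) \<Rightarrow> bool" where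
  "is_distr \<mu> \<longleftrightarrow> (\<forall>s. \<mu> s \<ge> 0) \<and> (\<Sum>s\<in>UNIV. \<mu> s) = 1"

definition is_policy :: "('s::finite \<Rightarrow> 'a::finite \<Rightarrow> real) \<Rightarrow> bool" where
  "is_policy pol \<longleftrightarrow> (\<forall>s. is_distr (pol s))"

fun sa_dist :: "('s::finite \<Rightarrow> 'a::finite \<Rightarrow> 's \<Rightarrow> real) \<Rightarrow> ('s \<Rightarrow> 'a \<Rightarrow> real)
    \<Rightarrow> 's \<Rightarrow> 'a \<Rightarrow> nat \<Rightarrow> 's \<Rightarrow> 'a \<Rightarrow> real" where
  "sa_dist P pol s a 0 s' a' = (if s' = s \<and> a' = a then 1 else 0)"
| "sa_dist P pol s a (Suc n) s' a' =
     (\<Sum>s''\<in>UNIV. \<Sum>a''\<in>UNIV. sa_dist P pol s a n s'' a'' * P s'' a'' s' * pol s' a')"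

fun s_dist :: "('s::finite \<Rightarrow> 'a::finite \<Rightarrow> 's \<Rightarrow> real) \<Rightarrow> ('s \<Rightarrow> 'a \<Rightarrow> real)
    \<Rightarrow> 's \<Rightarrow> nat \<Rightarrow> 's \<Rightarrow> real" where
  "s_dist P pol s 0 s' = (if s' = s then 1 else 0)"
| "s_dist P pol s (Suc n) s' =
     (\<Sum>s''\<in>UNIV. \<Sum>a\<in>UNIV. s_dist P pol s n s'' * pol s'' a * P s'' a s')"

definition Qf :: "('s::finite \<Rightarrow> 'a::finite \<Rightarrow> 's \<Rightarrow> real) \<Rightarrow> real \<Rightarrow> ('s \<Rightarrow> 'a \<Rightarrow> real)
    \<Rightarrow> ('s \<Rightarrow> 'a \<Rightarrow> real) \<Rightarrow> 's \<Rightarrow> 'a \<Rightarrow> real" where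
  "Qf P \<gamma> pol u s a =
     (\<Sum>\<tau>. \<gamma> ^ \<tau> * (\<Sum>s'\<in>UNIV. \<Sum>a'\<in>UNIV. sa_dist P pol s a \<tau> s' a' * u s' a'))"

definition Vf :: "('s::finite \<Rightarrow> 'a::finite \<Rightarrow> 's \<Rightarrow> real) \<Rightarrow> real \<Rightarrow> ('s \<Rightarrow> 'a \<Rightarrow> real)
    \<Rightarrow> ('s \<Rightarrow> 'a \<Rightarrow> real) \<Rightarrow> 's \<Rightarrow> real" where
  "Vf P \<gamma> pol u s = (\<Sum>a\<in>UNIV. pol s a * Qf P \<gamma> pol u s a)"

definition Vrho :: "('s::finite \<Rightarrow> 'a::finite \<Rightarrow> 's \<Rightarrow> real) \<Rightarrow> real \<Rightarrow> ('s \<Rightarrow> real)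
    \<Rightarrow> ('s \<Rightarrow> 'a \<Rightarrow> real) \<Rightarrow> ('s \<Rightarrow> 'a \<Rightarrow> real) \<Rightarrow> real" where
  "Vrho P \<gamma> \<rho> pol u = (\<Sum>s\<in>UNIV. \<rho> s * Vf P \<gamma> pol u s)"

definition visit :: "('s::finite \<Rightarrow> 'a::finite \<Rightarrow> 's \<Rightarrow> real) \<Rightarrow> real \<Rightarrow> ('s \<Rightarrow> real)
    \<Rightarrow> ('s \<Rightarrow> 'a \<Rightarrow> real) \<Rightarrow> 's \<Rightarrow> real" where
  "visit P \<gamma> \<rho> pol s = (1 - \<gamma>) * (\<Sum>s0\<in>UNIV. \<rho> s0 * (\<Sum>\<tau>. \<gamma> ^ \<tau> * s_dist P pol s0 \<tau> s))"

definition aug_lagr :: "('s::finite \<Rightarrow> 'a::finite \<Rightarrow> 's \<Rightarrow> real) \<Rightarrow> real \<Rightarrow> ('s \<Rightarrow> real)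
    \<Rightarrow> ('s \<Rightarrow> 'a \<Rightarrow> real) \<Rightarrow> nat \<Rightarrow> (nat \<Rightarrow> 's \<Rightarrow> 'a \<Rightarrow> real) \<Rightarrow> (nat \<Rightarrow> real)
    \<Rightarrow> real \<Rightarrow> ('s \<Rightarrow> 'a \<Rightarrow> real) \<Rightarrow> (nat \<Rightarrow> real) \<Rightarrow> real" where
  "aug_lagr P \<gamma> \<rho> r m c b \<beta> pol lam =
     Vrho P \<gamma> \<rho> pol r + \<beta> / 2 * (\<Sum>i<m.
        - (min (Vrho P \<gamma> \<rho> pol (c i) - b i - lam i / \<beta>) 0)\<^sup>2 + (lam i)\<^sup>2 / \<beta>\<^sup>2)"

definition Gam :: "('s::finite \<Rightarrow> 'a::finite \<Rightarrow> 's \<Rightarrow> real) \<Rightarrow> real \<Rightarrow> ('s \<Rightarrow> real)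
    \<Rightarrow> ('s \<Rightarrow> 'a \<Rightarrow> real) \<Rightarrow> nat \<Rightarrow> (nat \<Rightarrow> 's \<Rightarrow> 'a \<Rightarrow> real) \<Rightarrow> (nat \<Rightarrow> real)
    \<Rightarrow> real \<Rightarrow> ('s \<Rightarrow> 'a \<Rightarrow> real) \<Rightarrow> (nat \<Rightarrow> real) \<Rightarrow> 's \<Rightarrow> 'a \<Rightarrow> real" where
  "Gam P \<gamma> \<rho> r m c b \<beta> pol lam = (\<lambda>s a.
     r s a - \<beta> * (\<Sum>i<m. c i s a * min (Vrho P \<gamma> \<rho> pol (c i) - b i - lam i / \<beta>) 0))"

end

theory Submission
  imports Defs
begin

(* Let K be the state-to-state transition kernel of a policy pi and R = (I - gamma K)^-1 its
   resolvent. Then V(rho) = rho R r_pi and d^pi / (1 - gamma) = rho R. The resolvent identity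
   R_K - R_L = gamma R_K (K - L) R_L shows first that R depends continuously on the parameter and
   then that its derivative is gamma R K' R. With the Bellman equation Q = u + gamma P V this turns
   the derivative of V(rho) into the d^pi-weighted sum of Q times the derivative of pi (policy
   gradient theorem). Since y |-> min(y,0)^2 has derivative 2 min(y,0), the derivative of the
   augmented Lagrangian is that of V_r - beta sum_i min(V_{c_i} - b_i - lambda_i/beta, 0) V_{c_i}
   with the coefficients frozen at theta; as V is linear in the reward, this is the derivative of V
   for the frozen reward Gamma(pi_theta). *)

lemma sum_swap3:
  "(\<Sum>i\<in>A. \<Sum>j\<in>B. \<Sum>k\<in>C. f i j k) = (\<Sum>j\<in>B. \<Sum>k\<in>C. \<Sum>i\<in>A. f i j k)"
  by (subst sum.swap) (rule sum.cong[OF refl], rule sum.swap)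

lemma sum_sum_delta:
  fixes f :: "'s::finite \<Rightarrow> 'a::finite \<Rightarrow> real"
  shows "(\<Sum>x\<in>UNIV. \<Sum>y\<in>UNIV. if x = s \<and> y = a then f x y else 0) = f s a"
proof -
  have "(\<Sum>y\<in>UNIV. if x = s \<and> y = a then f x y else 0) = (if x = s then f x a else 0)" for x
    by (cases "x = s") (simp_all add: sum.delta')
  then show ?thesis by (simp add: sum.delta')
qed

lemma is_distr_le_one:
  assumes "is_distr \<mu>"
  shows "\<mu> x \<le> 1"
proof -
  have "\<mu> x \<le> (\<Sum>y\<in>UNIV. \<mu> y)"
    using assms by (intro member_le_sum) (auto simp: is_distr_def)
  with assms show ?thesis by (simp add: is_distr_def)
qed

lemma has_derivative_mult_vanishing:
  fixes g h :: "'a::real_normed_vector \<Rightarrow> real"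
  assumes g: "continuous (at x) g" and h: "(h has_derivative h') (at x)" and "h x = 0"
  shows "((\<lambda>y. g y * h y) has_derivative (\<lambda>v. g x * h' v)) (at x)"
proof -
  obtain K where K: "\<And>v. norm (h' v) \<le> norm v * K"
    using bounded_linear.bounded[OF has_derivative_bounded_linear[OF h]] by blast
  define N where "N y = norm (h y - h x - h' (y - x)) / norm (y - x)" for y
  have "(N \<longlongrightarrow> 0) (at x)"
    using h unfolding has_derivative_iff_norm N_def by simp
  moreover have "((\<lambda>y. g y - g x) \<longlongrightarrow> 0) (at x)"
    using g unfolding continuous_at by (rule LIM_zero)
  ultimately have "((\<lambda>y. \<bar>g x\<bar> * N y + \<bar>g y - g x\<bar> * (N y + K)) \<longlongrightarrow> \<bar>g x\<bar> * 0 + 0 * (0 + K)) (at x)"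
    by (intro tendsto_intros tendsto_rabs_zero)
  then have lim: "((\<lambda>y. \<bar>g x\<bar> * N y + \<bar>g y - g x\<bar> * (N y + K)) \<longlongrightarrow> 0) (at x)"
    by simp
  show ?thesis
  proof (rule has_derivativeI_sandwich[OF zero_less_one _ _ lim])
    show "bounded_linear (\<lambda>v. g x * h' v)"
      by (rule has_derivative_bounded_linear[OF has_derivative_mult_right[OF h]])
  next
    fix y
    assume "y \<noteq> x"
    let ?e = "h y - h x - h' (y - x)"
    have "\<bar>h y\<bar> \<le> \<bar>?e\<bar> + \<bar>h' (y - x)\<bar>"
      using \<open>h x = 0\<close> abs_triangle_ineq[of ?e "h' (y - x)"] by simp
    also have "\<dots> \<le> \<bar>?e\<bar> + norm (y - x) * K"
      using K[of "y - x"] by simp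
    finally have hy: "\<bar>h y\<bar> \<le> \<bar>?e\<bar> + norm (y - x) * K" .
    have "g y * h y - g x * h x - g x * h' (y - x) = g x * ?e + (g y - g x) * h y"
      using \<open>h x = 0\<close> by (simp add: algebra_simps)
    then have "\<bar>g y * h y - g x * h x - g x * h' (y - x)\<bar> \<le> \<bar>g x\<bar> * \<bar>?e\<bar> + \<bar>g y - g x\<bar> * \<bar>h y\<bar>"
      using abs_triangle_ineq[of "g x * ?e" "(g y - g x) * h y"] by (simp only: abs_mult)
    also have "\<dots> \<le> \<bar>g x\<bar> * \<bar>?e\<bar> + \<bar>g y - g x\<bar> * (\<bar>?e\<bar> + norm (y - x) * K)"
      by (intro add_left_mono mult_left_mono hy) simp
    finally show "norm (g y * h y - g x * h x - g x * h' (y - x)) / norm (y - x)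
        \<le> \<bar>g x\<bar> * N y + \<bar>g y - g x\<bar> * (N y + K)"
      using \<open>y \<noteq> x\<close> by (simp add: N_def divide_le_eq algebra_simps)
  qed
qed

lemma min_zero_square_taylor:
  fixes x y :: real
  shows "\<bar>(min y 0)\<^sup>2 - (min x 0)\<^sup>2 - 2 * min x 0 * (y - x)\<bar> \<le> (y - x)\<^sup>2"
proof (cases "y \<le> 0"; cases "x \<le> 0")
  assume "y \<le> 0" "\<not> x \<le> 0"
  then have "0 \<le> x * (x - 2 * y)" by simp
  with \<open>y \<le> 0\<close> \<open>\<not> x \<le> 0\<close> show ?thesis by (simp add: power2_eq_square algebra_simps)
next
  assume "\<not> y \<le> 0" "x \<le> 0"
  then have "0 \<le> x * (x - 2 * y)" "0 \<le> y * y" by (simp_all add: mult_nonpos_nonpos)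
  with \<open>\<not> y \<le> 0\<close> \<open>x \<le> 0\<close> show ?thesis by (simp add: power2_eq_square algebra_simps)
qed (use zero_le_square[of "y - x"] in \<open>simp_all add: power2_eq_square algebra_simps\<close>)

lemma has_derivative_min_zero_square:
  "((\<lambda>y::real. (min y 0)\<^sup>2) has_derivative (\<lambda>h. 2 * min x 0 * h)) (at x)"
proof (rule has_derivativeI_sandwich[OF zero_less_one bounded_linear_mult_right])
  show "(\<lambda>y. \<bar>y - x\<bar>) \<midarrow>x\<rightarrow> 0"
    by (intro tendsto_eq_intros) auto
next
  fix y :: real
  assume "y \<noteq> x"
  then show "norm ((min y 0)\<^sup>2 - (min x 0)\<^sup>2 - 2 * min x 0 * (y - x)) / norm (y - x) \<le> \<bar>y - x\<bar>"
    using min_zero_square_taylor[of y x] by (simp add: divide_le_eq power2_eq_square abs_mult[symmetric])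
qed

section \<open>Powers and resolvent of a stochastic kernel\<close>

fun kernel_pow :: "('n::finite \<Rightarrow> 'n \<Rightarrow> real) \<Rightarrow> nat \<Rightarrow> 'n \<Rightarrow> 'n \<Rightarrow> real" where
  "kernel_pow K 0 x y = (if y = x then 1 else 0)"
| "kernel_pow K (Suc n) x y = (\<Sum>z\<in>UNIV. kernel_pow K n x z * K z y)"

definition resolvent :: "real \<Rightarrow> ('n::finite \<Rightarrow> 'n \<Rightarrow> real) \<Rightarrow> 'n \<Rightarrow> 'n \<Rightarrow> real" where
  "resolvent \<gamma> K x y = (\<Sum>n. \<gamma> ^ n * kernel_pow K n x y)"

lemma kernel_pow_Suc_left:
  "kernel_pow K (Suc n) x y = (\<Sum>z\<in>UNIV. K x z * kernel_pow K n z y)"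
proof (induction n arbitrary: y)
  case 0
  have "(\<Sum>z\<in>UNIV. (if z = x then 1 else 0) * K z y) = K x y"
    "(\<Sum>z\<in>UNIV. K x z * (if y = z then 1 else 0)) = K x y"
    by (simp_all add: if_distrib[of "\<lambda>c. c * _"] if_distrib[of "\<lambda>c. _ * c"] sum.delta sum.delta'
        cong: if_cong)
  then show ?case by simp
next
  case (Suc n)
  have "kernel_pow K (Suc (Suc n)) x y = (\<Sum>w\<in>UNIV. \<Sum>z\<in>UNIV. K x z * kernel_pow K n z w * K w y)"
    unfolding kernel_pow.simps(2)[of K "Suc n" x y] Suc by (simp add: sum_distrib_right)
  also have "\<dots> = (\<Sum>z\<in>UNIV. K x z * kernel_pow K (Suc n) z y)"
    by (subst sum.swap) (simp add: sum_distrib_left mult.assoc)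
  finally show ?case .
qed

lemma kernel_pow_distr:
  assumes "\<And>x. is_distr (K x)"
  shows "is_distr (kernel_pow K n x)"
proof (induction n)
  case 0
  show ?case by (simp add: is_distr_def)
next
  case (Suc n)
  have "(\<Sum>y\<in>UNIV. kernel_pow K (Suc n) x y) = (\<Sum>z\<in>UNIV. kernel_pow K n x z * (\<Sum>y\<in>UNIV. K z y))"
    by (simp add: sum_distrib_left) (rule sum.swap)
  with Suc assms show ?case
    by (simp add: is_distr_def sum_nonneg)
qed

context
  fixes \<gamma> :: real and K :: "'n::finite \<Rightarrow> 'n \<Rightarrow> real"
  assumes discount: "0 \<le> \<gamma>" "\<gamma> < 1" and stochastic: "\<And>x. is_distr (K x)"
begin

lemma kernel_pow_bounds: "0 \<le> kernel_pow K n x y" "kernel_pow K n x y \<le> 1"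
  using kernel_pow_distr[where K = K, OF stochastic]
    is_distr_le_one[OF kernel_pow_distr[where K = K, OF stochastic]]
  by (auto simp: is_distr_def)

lemma summable_kernel_pow: "summable (\<lambda>n. \<gamma> ^ n * kernel_pow K n x y)"
proof (rule summable_comparison_test')
  show "summable (\<lambda>n. \<gamma> ^ n)" using discount by simp
  show "norm (\<gamma> ^ n * kernel_pow K n x y) \<le> \<gamma> ^ n" for n
    using kernel_pow_bounds[of n x y] discount by (simp add: abs_mult mult_left_le)
qed

lemma resolvent_bounds: "0 \<le> resolvent \<gamma> K x y" "resolvent \<gamma> K x y \<le> 1 / (1 - \<gamma>)"
proof -
  have nonneg: "0 \<le> \<gamma> ^ n * kernel_pow K n x y" for n
    using kernel_pow_bounds discount by simp
  then show "0 \<le> resolvent \<gamma> K x y"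
    unfolding resolvent_def by (intro suminf_nonneg summable_kernel_pow)
  have "resolvent \<gamma> K x y \<le> (\<Sum>n. \<gamma> ^ n)"
    unfolding resolvent_def using discount kernel_pow_bounds
    by (intro suminf_le summable_kernel_pow) (auto simp: mult_left_le)
  also have "\<dots> = 1 / (1 - \<gamma>)" using discount by (simp add: suminf_geometric)
  finally show "resolvent \<gamma> K x y \<le> 1 / (1 - \<gamma>)" .
qed

lemma summable_kernel_pow_sum:
  "summable (\<lambda>n. \<Sum>x\<in>UNIV. \<Sum>y\<in>UNIV. c x y * (\<gamma> ^ n * kernel_pow K n x y))"
  by (intro summable_sum summable_mult summable_kernel_pow)

lemma suminf_kernel_pow_sum:
  "(\<Sum>n. \<Sum>x\<in>UNIV. \<Sum>y\<in>UNIV. c x y * (\<gamma> ^ n * kernel_pow K n x y)) =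
    (\<Sum>x\<in>UNIV. \<Sum>y\<in>UNIV. c x y * resolvent \<gamma> K x y)"
proof -
  have "(\<Sum>n. \<Sum>y\<in>UNIV. c x y * (\<gamma> ^ n * kernel_pow K n x y)) = (\<Sum>y\<in>UNIV. c x y * resolvent \<gamma> K x y)" for x
    unfolding resolvent_def
    by (subst suminf_sum) (auto intro!: sum.cong suminf_mult summable_mult summable_kernel_pow)
  then show ?thesis
    by (subst suminf_sum) (auto intro!: summable_sum summable_mult summable_kernel_pow)
qed

lemma resolvent_unfold_right:
  "resolvent \<gamma> K x y = (if y = x then 1 else 0) + \<gamma> * (\<Sum>z\<in>UNIV. resolvent \<gamma> K x z * K z y)"
proof -
  have "(\<Sum>n. \<gamma> ^ Suc n * kernel_pow K (Suc n) x y) = (\<Sum>n. \<Sum>z\<in>UNIV. \<gamma> * (\<gamma> ^ n * kernel_pow K n x z * K z y))"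
    by (simp add: sum_distrib_left mult_ac)
  also have "\<dots> = \<gamma> * (\<Sum>z\<in>UNIV. resolvent \<gamma> K x z * K z y)"
    unfolding resolvent_def
    by (simp add: suminf_sum summable_kernel_pow summable_mult summable_mult2 suminf_mult suminf_mult2
        sum_distrib_left)
  moreover have "resolvent \<gamma> K x y = kernel_pow K 0 x y + (\<Sum>n. \<gamma> ^ Suc n * kernel_pow K (Suc n) x y)"
    unfolding resolvent_def using suminf_split_head[OF summable_kernel_pow, of x y] by simp
  ultimately show ?thesis by simp
qed

lemma resolvent_unfold_left:
  "resolvent \<gamma> K x y = (if y = x then 1 else 0) + \<gamma> * (\<Sum>z\<in>UNIV. K x z * resolvent \<gamma> K z y)"
proof -
  have "(\<Sum>n. \<gamma> ^ Suc n * kernel_pow K (Suc n) x y) = (\<Sum>n. \<Sum>z\<in>UNIV. \<gamma> * (K x z * (\<gamma> ^ n * kernel_pow K n z y)))"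
    unfolding kernel_pow_Suc_left by (simp add: sum_distrib_left mult_ac del: kernel_pow.simps)
  also have "\<dots> = \<gamma> * (\<Sum>z\<in>UNIV. K x z * resolvent \<gamma> K z y)"
    unfolding resolvent_def
    by (simp add: suminf_sum summable_kernel_pow summable_mult suminf_mult sum_distrib_left)
  moreover have "resolvent \<gamma> K x y = kernel_pow K 0 x y + (\<Sum>n. \<gamma> ^ Suc n * kernel_pow K (Suc n) x y)"
    unfolding resolvent_def using suminf_split_head[OF summable_kernel_pow, of x y] by simp
  ultimately show ?thesis by simp
qed

end

lemma resolvent_diff:
  assumes "0 \<le> \<gamma>" "\<gamma> < 1" and "\<And>x. is_distr (K x)" "\<And>x. is_distr (L x)"
  shows "resolvent \<gamma> K x y - resolvent \<gamma> L x y =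
    \<gamma> * (\<Sum>z\<in>UNIV. \<Sum>w\<in>UNIV. resolvent \<gamma> K x z * (K z w - L z w) * resolvent \<gamma> L w y)"
proof -
  let ?R\<^sub>K = "resolvent \<gamma> K" and ?R\<^sub>L = "resolvent \<gamma> L"
  have K_step: "\<gamma> * (\<Sum>z\<in>UNIV. ?R\<^sub>K x z * K z w) = ?R\<^sub>K x w - (if w = x then 1 else 0)" for w
    using resolvent_unfold_right[where K = K and x = x and y = w, OF assms(1-3)] by linarith
  have L_step: "\<gamma> * (\<Sum>w\<in>UNIV. L z w * ?R\<^sub>L w y) = ?R\<^sub>L z y - (if y = z then 1 else 0)" for z
    using resolvent_unfold_left[where K = L and x = z and y = y, OF assms(1,2,4)] by linarith
  have "\<gamma> * (\<Sum>z\<in>UNIV. \<Sum>w\<in>UNIV. ?R\<^sub>K x z * K z w * ?R\<^sub>L w y)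
      = (\<Sum>w\<in>UNIV. (\<gamma> * (\<Sum>z\<in>UNIV. ?R\<^sub>K x z * K z w)) * ?R\<^sub>L w y)"
    by (subst sum.swap) (simp add: sum_distrib_left sum_distrib_right mult_ac)
  also have "\<dots> = (\<Sum>w\<in>UNIV. (?R\<^sub>K x w - (if w = x then 1 else 0)) * ?R\<^sub>L w y)"
    by (simp only: K_step)
  also have "\<dots> = (\<Sum>w\<in>UNIV. ?R\<^sub>K x w * ?R\<^sub>L w y) - ?R\<^sub>L x y"
    by (simp add: left_diff_distrib sum_subtractf if_distrib[of "\<lambda>c. c * _"] sum.delta' cong: if_cong)
  finally have 1: "\<gamma> * (\<Sum>z\<in>UNIV. \<Sum>w\<in>UNIV. ?R\<^sub>K x z * K z w * ?R\<^sub>L w y)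
      = (\<Sum>w\<in>UNIV. ?R\<^sub>K x w * ?R\<^sub>L w y) - ?R\<^sub>L x y" .
  have "\<gamma> * (\<Sum>z\<in>UNIV. \<Sum>w\<in>UNIV. ?R\<^sub>K x z * L z w * ?R\<^sub>L w y)
      = (\<Sum>z\<in>UNIV. ?R\<^sub>K x z * (\<gamma> * (\<Sum>w\<in>UNIV. L z w * ?R\<^sub>L w y)))"
    by (simp add: sum_distrib_left mult_ac)
  also have "\<dots> = (\<Sum>z\<in>UNIV. ?R\<^sub>K x z * (?R\<^sub>L z y - (if y = z then 1 else 0)))"
    by (simp only: L_step)
  also have "\<dots> = (\<Sum>z\<in>UNIV. ?R\<^sub>K x z * ?R\<^sub>L z y) - ?R\<^sub>K x y"
    by (simp add: right_diff_distrib sum_subtractf if_distrib[of "\<lambda>c. _ * c"] sum.delta cong: if_cong)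
  finally have 0: "\<gamma> * (\<Sum>z\<in>UNIV. \<Sum>w\<in>UNIV. ?R\<^sub>K x z * L z w * ?R\<^sub>L w y)
      = (\<Sum>z\<in>UNIV. ?R\<^sub>K x z * ?R\<^sub>L z y) - ?R\<^sub>K x y" .
  show ?thesis
    using 1 0 by (simp add: left_diff_distrib right_diff_distrib sum_subtractf)
qed

section \<open>Differentiating the resolvent along a family of kernels\<close>

context
  fixes \<gamma> :: real and K :: "'p::real_normed_vector \<Rightarrow> 'n::finite \<Rightarrow> 'n \<Rightarrow> real"
    and K' :: "'n \<Rightarrow> 'n \<Rightarrow> 'p \<Rightarrow> real" and \<theta> :: 'p
  assumes discount: "0 \<le> \<gamma>" "\<gamma> < 1" and stochastic: "\<And>t x. is_distr (K t x)"
    and kernel_deriv: "\<And>x y. ((\<lambda>t. K t x y) has_derivative K' x y) (at \<theta>)"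
begin

lemma continuous_resolvent: "continuous (at \<theta>) (\<lambda>t. resolvent \<gamma> (K t) x y)"
proof -
  let ?C = "1 / (1 - \<gamma>)"
  have abs_R: "\<bar>resolvent \<gamma> (K t) u v\<bar> \<le> ?C" for t u v
    using resolvent_bounds[where K = "K t" for t, OF discount stochastic] by (simp add: abs_le_iff)
  have bound: "\<bar>resolvent \<gamma> (K t) x y - resolvent \<gamma> (K \<theta>) x y\<bar>
      \<le> \<gamma> * (\<Sum>z\<in>UNIV. \<Sum>w\<in>UNIV. ?C * \<bar>K t z w - K \<theta> z w\<bar> * ?C)" for t
  proof -
    have "\<bar>\<Sum>z\<in>UNIV. \<Sum>w\<in>UNIV. resolvent \<gamma> (K t) x z * (K t z w - K \<theta> z w) * resolvent \<gamma> (K \<theta>) w y\<bar>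
        \<le> (\<Sum>z\<in>UNIV. \<Sum>w\<in>UNIV. ?C * \<bar>K t z w - K \<theta> z w\<bar> * ?C)"
    proof (intro order.trans[OF sum_abs] sum_mono order.trans[OF sum_abs])
      fix z w
      have "0 \<le> ?C" using discount by simp
      then show "\<bar>resolvent \<gamma> (K t) x z * (K t z w - K \<theta> z w) * resolvent \<gamma> (K \<theta>) w y\<bar>
          \<le> ?C * \<bar>K t z w - K \<theta> z w\<bar> * ?C"
        unfolding abs_mult by (intro mult_mono abs_R order_refl) simp_all
    qed
    then show ?thesis
      using resolvent_diff[where K = "K t" and L = "K \<theta>", OF discount stochastic stochastic] discount
      by (simp add: abs_mult mult_left_mono)
  qed
  have "(\<lambda>t. K t z w) \<midarrow>\<theta>\<rightarrow> K \<theta> z w" for z w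
    using has_derivative_continuous[OF kernel_deriv] by (simp add: continuous_at)
  then have "(\<lambda>t. \<gamma> * (\<Sum>z\<in>UNIV. \<Sum>w\<in>UNIV. ?C * \<bar>K t z w - K \<theta> z w\<bar> * ?C)) \<midarrow>\<theta>\<rightarrow>
      \<gamma> * (\<Sum>z\<in>UNIV. \<Sum>w\<in>UNIV. ?C * \<bar>K \<theta> z w - K \<theta> z w\<bar> * ?C)"
    by (intro tendsto_intros)
  then have "(\<lambda>t. \<gamma> * (\<Sum>z\<in>UNIV. \<Sum>w\<in>UNIV. ?C * \<bar>K t z w - K \<theta> z w\<bar> * ?C)) \<midarrow>\<theta>\<rightarrow> 0"
    by simp
  then have "(\<lambda>t. resolvent \<gamma> (K t) x y - resolvent \<gamma> (K \<theta>) x y) \<midarrow>\<theta>\<rightarrow> 0"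
    by (rule Lim_null_comparison[OF always_eventually, rotated]) (use bound in simp)
  then show ?thesis
    unfolding continuous_at by (rule LIM_zero_cancel)
qed

lemma resolvent_has_derivative:
  "((\<lambda>t. resolvent \<gamma> (K t) x y) has_derivative
     (\<lambda>v. \<gamma> * (\<Sum>z\<in>UNIV. \<Sum>w\<in>UNIV. resolvent \<gamma> (K \<theta>) x z * K' z w v * resolvent \<gamma> (K \<theta>) w y))) (at \<theta>)"
proof -
  let ?R = "\<lambda>t. resolvent \<gamma> (K t)"
  have "(\<lambda>t. ?R t x y) = (\<lambda>t. ?R \<theta> x y +
      \<gamma> * (\<Sum>z\<in>UNIV. \<Sum>w\<in>UNIV. ?R t x z * ((K t z w - K \<theta> z w) * ?R \<theta> w y)))"
  proof
    fix t
    show "?R t x y = ?R \<theta> x y + \<gamma> * (\<Sum>z\<in>UNIV. \<Sum>w\<in>UNIV. ?R t x z * ((K t z w - K \<theta> z w) * ?R \<theta> w y))"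
      using resolvent_diff[where K = "K t" and L = "K \<theta>", OF discount stochastic stochastic, of x y]
      unfolding mult.assoc by linarith
  qed
  moreover have "((\<lambda>t. ?R t x z * ((K t z w - K \<theta> z w) * ?R \<theta> w y)) has_derivative
      (\<lambda>v. ?R \<theta> x z * ((K' z w v - 0) * ?R \<theta> w y))) (at \<theta>)" for z w
    by (rule has_derivative_mult_vanishing[OF continuous_resolvent])
      (intro has_derivative_mult_left has_derivative_diff kernel_deriv has_derivative_const, simp)
  then have "((\<lambda>t. ?R \<theta> x y + \<gamma> * (\<Sum>z\<in>UNIV. \<Sum>w\<in>UNIV. ?R t x z * ((K t z w - K \<theta> z w) * ?R \<theta> w y)))
      has_derivative (\<lambda>v. 0 + \<gamma> * (\<Sum>z\<in>UNIV. \<Sum>w\<in>UNIV. ?R \<theta> x z * ((K' z w v - 0) * ?R \<theta> w y)))) (at \<theta>)"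
    by (intro has_derivative_add has_derivative_const has_derivative_mult_right has_derivative_sum)
  ultimately show ?thesis
    by (simp add: mult.assoc)
qed

end

section \<open>Value functions through the resolvent\<close>

definition state_kernel :: "('s::finite \<Rightarrow> 'a::finite \<Rightarrow> 's \<Rightarrow> real) \<Rightarrow> ('s \<Rightarrow> 'a \<Rightarrow> real) \<Rightarrow> 's \<Rightarrow> 's \<Rightarrow> real" where
  "state_kernel P pol s s' = (\<Sum>a\<in>UNIV. pol s a * P s a s')"

definition policy_reward :: "('s::finite \<Rightarrow> 'a::finite \<Rightarrow> real) \<Rightarrow> ('s \<Rightarrow> 'a \<Rightarrow> real) \<Rightarrow> 's \<Rightarrow> real" where
  "policy_reward pol u s = (\<Sum>a\<in>UNIV. pol s a * u s a)"

lemma state_kernel_distr: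
  assumes "is_kernel P" "is_policy pol"
  shows "is_distr (state_kernel P pol s)"
proof -
  have "(\<Sum>s'\<in>UNIV. state_kernel P pol s s') = (\<Sum>a\<in>UNIV. pol s a * (\<Sum>s'\<in>UNIV. P s a s'))"
    unfolding state_kernel_def by (subst sum.swap) (simp add: sum_distrib_left)
  with assms show ?thesis
    by (simp add: is_distr_def is_kernel_def is_policy_def state_kernel_def sum_nonneg)
qed

lemma s_dist_eq_kernel_pow: "s_dist P pol s n s' = kernel_pow (state_kernel P pol) n s s'"
  by (induction n arbitrary: s') (simp_all add: state_kernel_def sum_distrib_left mult.assoc)

lemma sa_dist_Suc_eq_s_dist:
  "sa_dist P pol s a (Suc n) s' a' = (\<Sum>y\<in>UNIV. P s a y * s_dist P pol y n s') * pol s' a'"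
proof (induction n arbitrary: s' a')
  case 0
  have "(\<Sum>x\<in>UNIV. \<Sum>y\<in>UNIV. (if x = s \<and> y = a then 1 else 0) * P x y s' * pol s' a') = P s a s' * pol s' a'"
    by (simp add: if_distrib[of "\<lambda>c. c * _"] sum_sum_delta cong: if_cong)
  moreover have "(\<Sum>y\<in>UNIV. P s a y * (if s' = y then 1 else 0)) = P s a s'"
    by (simp add: if_distrib[of "\<lambda>c. _ * c"] sum.delta cong: if_cong)
  ultimately show ?case by simp
next
  case (Suc n)
  have "sa_dist P pol s a (Suc (Suc n)) s' a' = (\<Sum>x\<in>UNIV. \<Sum>b\<in>UNIV. \<Sum>y\<in>UNIV.
      P s a y * (s_dist P pol y n x * pol x b * P x b s') * pol s' a')"
    unfolding sa_dist.simps(2)[of P pol s a "Suc n"] Suc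
    by (simp add: sum_distrib_left sum_distrib_right mult_ac)
  also have "\<dots> = (\<Sum>y\<in>UNIV. \<Sum>x\<in>UNIV. \<Sum>b\<in>UNIV.
      P s a y * (s_dist P pol y n x * pol x b * P x b s') * pol s' a')"
    by (rule sum_swap3[symmetric])
  also have "\<dots> = (\<Sum>y\<in>UNIV. P s a y * s_dist P pol y (Suc n) s') * pol s' a'"
    by (simp add: sum_distrib_left sum_distrib_right)
  finally show ?case .
qed

context
  fixes P :: "'s::finite \<Rightarrow> 'a::finite \<Rightarrow> 's \<Rightarrow> real" and \<gamma> :: real and pol :: "'s \<Rightarrow> 'a \<Rightarrow> real"
  assumes kernel: "is_kernel P" and discount: "0 \<le> \<gamma>" "\<gamma> < 1" and policy: "is_policy pol"
begin

lemma Qf_eq_resolvent: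
  "Qf P \<gamma> pol u s a = u s a + \<gamma> * (\<Sum>y\<in>UNIV. P s a y *
     (\<Sum>s'\<in>UNIV. resolvent \<gamma> (state_kernel P pol) y s' * policy_reward pol u s'))"
proof -
  let ?K = "state_kernel P pol"
  define E where "E n = (\<Sum>s'\<in>UNIV. \<Sum>a'\<in>UNIV. sa_dist P pol s a n s' a' * u s' a')" for n
  have E_Suc_eq:
    "E (Suc n) = (\<Sum>y\<in>UNIV. P s a y * (\<Sum>s'\<in>UNIV. kernel_pow ?K n y s' * policy_reward pol u s'))" for n
  proof -
    have "E (Suc n) = (\<Sum>s'\<in>UNIV. (\<Sum>y\<in>UNIV. P s a y * kernel_pow ?K n y s') * policy_reward pol u s')"
      unfolding E_def sa_dist_Suc_eq_s_dist s_dist_eq_kernel_pow policy_reward_def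
      by (simp add: sum_distrib_left mult_ac) (rule sum.cong[OF refl], rule sum.swap)
    also have "\<dots> = (\<Sum>y\<in>UNIV. P s a y * (\<Sum>s'\<in>UNIV. kernel_pow ?K n y s' * policy_reward pol u s'))"
      unfolding sum_distrib_right by (subst sum.swap) (simp add: sum_distrib_left mult_ac)
    finally show ?thesis .
  qed
  have E_Suc: "\<gamma> ^ Suc n * E (Suc n) = \<gamma> * (\<Sum>y\<in>UNIV. \<Sum>s'\<in>UNIV.
      (P s a y * policy_reward pol u s') * (\<gamma> ^ n * kernel_pow ?K n y s'))" for n
    unfolding E_Suc_eq by (simp add: sum_distrib_left mult_ac)
  have "summable (\<lambda>n. \<gamma> ^ Suc n * E (Suc n))"
    unfolding E_Suc by (intro summable_mult summable_kernel_pow_sum discount state_kernel_distr[OF kernel policy])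
  then have "summable (\<lambda>n. \<gamma> ^ n * E n)"
    by (rule summable_Suc_iff[of "\<lambda>n. \<gamma> ^ n * E n", THEN iffD1])
  then have "Qf P \<gamma> pol u s a = E 0 + (\<Sum>n. \<gamma> ^ Suc n * E (Suc n))"
    unfolding Qf_def E_def[symmetric] by (subst suminf_split_head) simp_all
  also have "E 0 = u s a"
    by (simp add: E_def if_distrib[of "\<lambda>c. c * _"] sum_sum_delta cong: if_cong)
  also have "(\<Sum>n. \<gamma> ^ Suc n * E (Suc n)) =
      \<gamma> * (\<Sum>y\<in>UNIV. P s a y * (\<Sum>s'\<in>UNIV. resolvent \<gamma> ?K y s' * policy_reward pol u s'))"
    unfolding E_Suc
      suminf_mult[OF summable_kernel_pow_sum[where K = ?K, OF discount state_kernel_distr[OF kernel policy]]]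
      suminf_kernel_pow_sum[where K = ?K, OF discount state_kernel_distr[OF kernel policy]]
    by (simp add: sum_distrib_left mult_ac)
  finally show ?thesis .
qed

lemma Vf_eq_resolvent:
  "Vf P \<gamma> pol u s = (\<Sum>s'\<in>UNIV. resolvent \<gamma> (state_kernel P pol) s s' * policy_reward pol u s')"
proof -
  let ?K = "state_kernel P pol" and ?r = "policy_reward pol u"
  define R where "R = resolvent \<gamma> ?K"
  define W where "W y = (\<Sum>s'\<in>UNIV. R y s' * ?r s')" for y
  define X where "X s' = (\<Sum>y\<in>UNIV. ?K s y * R y s')" for s'
  have "Vf P \<gamma> pol u s = (\<Sum>a\<in>UNIV. pol s a * (u s a + \<gamma> * (\<Sum>y\<in>UNIV. P s a y * W y)))"
    unfolding Vf_def Qf_eq_resolvent R_def W_def ..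
  also have "\<dots> = ?r s + \<gamma> * (\<Sum>a\<in>UNIV. pol s a * (\<Sum>y\<in>UNIV. P s a y * W y))"
    by (simp add: policy_reward_def distrib_left sum.distrib sum_distrib_left mult_ac)
  also have "(\<Sum>a\<in>UNIV. pol s a * (\<Sum>y\<in>UNIV. P s a y * W y)) = (\<Sum>y\<in>UNIV. ?K s y * W y)"
    unfolding state_kernel_def sum_distrib_left sum_distrib_right by (subst sum.swap) (simp add: mult_ac)
  also have "\<dots> = (\<Sum>s'\<in>UNIV. X s' * ?r s')"
    unfolding W_def X_def sum_distrib_left sum_distrib_right by (subst sum.swap) (simp add: mult_ac)
  also have "?r s + \<gamma> * \<dots> = (\<Sum>s'\<in>UNIV. ((if s' = s then 1 else 0) + \<gamma> * X s') * ?r s')"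
    by (simp add: distrib_right sum.distrib sum_distrib_left mult.assoc if_distrib[of "\<lambda>c. c * _"]
        sum.delta' cong: if_cong)
  also have "\<dots> = (\<Sum>s'\<in>UNIV. R s s' * ?r s')"
    unfolding R_def X_def
      resolvent_unfold_left[where K = ?K and x = s, OF discount state_kernel_distr[OF kernel policy]] ..
  finally show ?thesis
    unfolding R_def .
qed

lemma Qf_bellman: "Qf P \<gamma> pol u s a = u s a + \<gamma> * (\<Sum>y\<in>UNIV. P s a y * Vf P \<gamma> pol u y)"
  by (simp add: Qf_eq_resolvent Vf_eq_resolvent)

lemma visit_eq_resolvent:
  "visit P \<gamma> \<rho> pol s = (1 - \<gamma>) * (\<Sum>s\<^sub>0\<in>UNIV. \<rho> s\<^sub>0 * resolvent \<gamma> (state_kernel P pol) s\<^sub>0 s)"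
  by (simp add: visit_def resolvent_def s_dist_eq_kernel_pow)

lemma sum_resolvent_eq_sum_visit:
  "(\<Sum>s\<^sub>0\<in>UNIV. \<rho> s\<^sub>0 * (\<Sum>s\<in>UNIV. resolvent \<gamma> (state_kernel P pol) s\<^sub>0 s * f s)) =
    (\<Sum>s\<in>UNIV. visit P \<gamma> \<rho> pol s / (1 - \<gamma>) * f s)"
proof -
  have weight: "visit P \<gamma> \<rho> pol s / (1 - \<gamma>) = (\<Sum>s\<^sub>0\<in>UNIV. \<rho> s\<^sub>0 * resolvent \<gamma> (state_kernel P pol) s\<^sub>0 s)"
    for s using discount by (simp add: visit_eq_resolvent)
  show ?thesis
    unfolding weight sum_distrib_left sum_distrib_right by (subst sum.swap) (simp add: mult_ac)
qed

lemma Vrho_eq_visit: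
  "Vrho P \<gamma> \<rho> pol u = (\<Sum>s\<in>UNIV. visit P \<gamma> \<rho> pol s / (1 - \<gamma>) * policy_reward pol u s)"
  unfolding Vrho_def Vf_eq_resolvent sum_resolvent_eq_sum_visit ..

lemma Vrho_Gam:
  "Vrho P \<gamma> \<rho> pol (Gam P \<gamma> \<rho> r m c b \<beta> pol' lam) =
    Vrho P \<gamma> \<rho> pol r - \<beta> * (\<Sum>i<m. min (Vrho P \<gamma> \<rho> pol' (c i) - b i - lam i / \<beta>) 0 * Vrho P \<gamma> \<rho> pol (c i))"
  by (simp add: Gam_def Vrho_eq_visit policy_reward_def right_diff_distrib sum_subtractf sum_distrib_left
      mult_ac sum.swap[of _ "{..<m}"])

(* The left-hand side is the derivative of Vf at s\<^sub>0 in the direction Dh of the policy, as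
   delivered by resolvent_has_derivative; the Bellman equation turns it into a sum of Q-values. *)
lemma Vf_gradient_identity:
  "(\<Sum>s\<in>UNIV. resolvent \<gamma> (state_kernel P pol) s\<^sub>0 s * (\<Sum>a\<in>UNIV. Dh s a * u s a) +
      \<gamma> * (\<Sum>z\<in>UNIV. \<Sum>w\<in>UNIV. resolvent \<gamma> (state_kernel P pol) s\<^sub>0 z * (\<Sum>a\<in>UNIV. Dh z a * P z a w) *
        resolvent \<gamma> (state_kernel P pol) w s) * policy_reward pol u s)
   = (\<Sum>s\<in>UNIV. resolvent \<gamma> (state_kernel P pol) s\<^sub>0 s * (\<Sum>a\<in>UNIV. Qf P \<gamma> pol u s a * Dh s a))"
proof -
  define R where "R = resolvent \<gamma> (state_kernel P pol)"
  define V where "V = Vf P \<gamma> pol u"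
  define Kd where "Kd z w = (\<Sum>a\<in>UNIV. Dh z a * P z a w)" for z w
  define G where "G z = (\<Sum>a\<in>UNIV. Dh z a * (\<Sum>w\<in>UNIV. P z a w * V w))" for z
  have V_eq: "V w = (\<Sum>s\<in>UNIV. R w s * policy_reward pol u s)" for w
    unfolding V_def R_def by (rule Vf_eq_resolvent)
  have Kd_V: "(\<Sum>w\<in>UNIV. Kd z w * V w) = G z" for z
    unfolding Kd_def G_def sum_distrib_left sum_distrib_right by (subst sum.swap) (simp add: mult.assoc)
  have "(\<Sum>s\<in>UNIV. (\<Sum>z\<in>UNIV. \<Sum>w\<in>UNIV. R s\<^sub>0 z * Kd z w * R w s) * policy_reward pol u s)
      = (\<Sum>z\<in>UNIV. \<Sum>w\<in>UNIV. \<Sum>s\<in>UNIV. R s\<^sub>0 z * (Kd z w * (R w s * policy_reward pol u s)))"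
    unfolding sum_distrib_right by (subst sum_swap3) (simp only: mult.assoc)
  also have "\<dots> = (\<Sum>z\<in>UNIV. R s\<^sub>0 z * (\<Sum>w\<in>UNIV. Kd z w * V w))"
    unfolding V_eq by (simp only: sum_distrib_left)
  also have "\<dots> = (\<Sum>z\<in>UNIV. R s\<^sub>0 z * G z)"
    by (simp only: Kd_V)
  finally have "(\<Sum>s\<in>UNIV. R s\<^sub>0 s * (\<Sum>a\<in>UNIV. Dh s a * u s a) +
      \<gamma> * (\<Sum>z\<in>UNIV. \<Sum>w\<in>UNIV. R s\<^sub>0 z * Kd z w * R w s) * policy_reward pol u s)
      = (\<Sum>x\<in>UNIV. R s\<^sub>0 x * ((\<Sum>a\<in>UNIV. Dh x a * u x a) + \<gamma> * G x))"
    by (simp add: sum.distrib distrib_left sum_distrib_left[symmetric] mult.assoc)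
      (simp add: sum_distrib_left mult.left_commute)
  moreover have "(\<Sum>a\<in>UNIV. Dh x a * u x a) + \<gamma> * G x = (\<Sum>a\<in>UNIV. Qf P \<gamma> pol u x a * Dh x a)" for x
    unfolding Qf_bellman G_def V_def
    by (simp add: distrib_left distrib_right sum.distrib sum_distrib_left mult_ac)
  ultimately show ?thesis
    unfolding R_def Kd_def by simp
qed

end

section \<open>Policy gradient\<close>

lemma Vf_has_derivative:
  fixes pol :: "'p::real_normed_vector \<Rightarrow> 's::finite \<Rightarrow> 'a::finite \<Rightarrow> real"
  assumes kernel: "is_kernel P" and discount: "0 \<le> \<gamma>" "\<gamma> < 1"
    and policy: "\<And>t. is_policy (pol t)"
    and pol_deriv: "\<And>s a. ((\<lambda>t. pol t s a) has_derivative D s a) (at \<theta>)"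
  shows "((\<lambda>t. Vf P \<gamma> (pol t) u s\<^sub>0) has_derivative (\<lambda>h. \<Sum>s\<in>UNIV.
    resolvent \<gamma> (state_kernel P (pol \<theta>)) s\<^sub>0 s * (\<Sum>a\<in>UNIV. Qf P \<gamma> (pol \<theta>) u s a * D s a h))) (at \<theta>)"
proof -
  let ?K = "\<lambda>t. state_kernel P (pol t)"
  have "((\<lambda>t. ?K t x y) has_derivative (\<lambda>h. \<Sum>a\<in>UNIV. D x a h * P x a y)) (at \<theta>)" for x y
    unfolding state_kernel_def by (intro has_derivative_sum has_derivative_mult_left pol_deriv)
  note resolvent_deriv =
    resolvent_has_derivative[where K = ?K, OF discount state_kernel_distr[OF kernel policy] this]
  have "Vf P \<gamma> (pol t) u s\<^sub>0 = (\<Sum>s\<in>UNIV. resolvent \<gamma> (?K t) s\<^sub>0 s * (\<Sum>a\<in>UNIV. pol t s a * u s a))" for t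
    unfolding Vf_eq_resolvent[OF kernel discount policy] policy_reward_def ..
  moreover have "((\<lambda>t. \<Sum>s\<in>UNIV. resolvent \<gamma> (?K t) s\<^sub>0 s * (\<Sum>a\<in>UNIV. pol t s a * u s a)) has_derivative
    (\<lambda>h. \<Sum>s\<in>UNIV. resolvent \<gamma> (?K \<theta>) s\<^sub>0 s * (\<Sum>a\<in>UNIV. D s a h * u s a) +
      \<gamma> * (\<Sum>z\<in>UNIV. \<Sum>w\<in>UNIV. resolvent \<gamma> (?K \<theta>) s\<^sub>0 z * (\<Sum>a\<in>UNIV. D z a h * P z a w) *
        resolvent \<gamma> (?K \<theta>) w s) * policy_reward (pol \<theta>) u s)) (at \<theta>)"
    unfolding policy_reward_def
    by (intro has_derivative_sum has_derivative_mult_left has_derivative_mult resolvent_deriv pol_deriv)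
  ultimately show ?thesis
    unfolding Vf_gradient_identity[OF kernel discount policy] by simp
qed

theorem Vrho_has_derivative:
  fixes pol :: "'p::real_normed_vector \<Rightarrow> 's::finite \<Rightarrow> 'a::finite \<Rightarrow> real"
  assumes kernel: "is_kernel P" and discount: "0 \<le> \<gamma>" "\<gamma> < 1"
    and policy: "\<And>t. is_policy (pol t)"
    and pol_deriv: "\<And>s a. ((\<lambda>t. pol t s a) has_derivative D s a) (at \<theta>)"
  shows "((\<lambda>t. Vrho P \<gamma> \<rho> (pol t) u) has_derivative
    (\<lambda>h. \<Sum>s\<in>UNIV. visit P \<gamma> \<rho> (pol \<theta>) s / (1 - \<gamma>) * (\<Sum>a\<in>UNIV. Qf P \<gamma> (pol \<theta>) u s a * D s a h))) (at \<theta>)"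
proof -
  have "((\<lambda>t. \<Sum>s\<^sub>0\<in>UNIV. \<rho> s\<^sub>0 * Vf P \<gamma> (pol t) u s\<^sub>0) has_derivative (\<lambda>h. \<Sum>s\<^sub>0\<in>UNIV. \<rho> s\<^sub>0 *
    (\<Sum>s\<in>UNIV. resolvent \<gamma> (state_kernel P (pol \<theta>)) s\<^sub>0 s * (\<Sum>a\<in>UNIV. Qf P \<gamma> (pol \<theta>) u s a * D s a h))))
    (at \<theta>)"
    by (intro has_derivative_sum has_derivative_mult_right Vf_has_derivative[OF assms])
  then show ?thesis
    unfolding Vrho_def sum_resolvent_eq_sum_visit[OF kernel discount policy] .
qed

lemma aug_lagr_has_derivative:
  assumes V_deriv: "\<And>u. ((\<lambda>t. Vrho P \<gamma> \<rho> (pol t) u) has_derivative G u) (at \<theta>)"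
  shows "((\<lambda>t. aug_lagr P \<gamma> \<rho> r m c b \<beta> (pol t) lam) has_derivative (\<lambda>h. G r h -
    \<beta> * (\<Sum>i<m. min (Vrho P \<gamma> \<rho> (pol \<theta>) (c i) - b i - lam i / \<beta>) 0 * G (c i) h))) (at \<theta>)"
proof -
  define M where "M i = min (Vrho P \<gamma> \<rho> (pol \<theta>) (c i) - b i - lam i / \<beta>) 0" for i
  have "((\<lambda>t. (min (Vrho P \<gamma> \<rho> (pol t) (c i) - b i - lam i / \<beta>) 0)\<^sup>2) has_derivative
      (\<lambda>h. 2 * M i * (G (c i) h - 0 - 0))) (at \<theta>)" for i
    unfolding M_def
    by (rule has_derivative_compose[OF _ has_derivative_min_zero_square])
      (intro has_derivative_diff V_deriv has_derivative_const)
  then have "((\<lambda>t. aug_lagr P \<gamma> \<rho> r m c b \<beta> (pol t) lam) has_derivative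
      (\<lambda>h. G r h + \<beta> / 2 * (\<Sum>i<m. - (2 * M i * (G (c i) h - 0 - 0)) + 0))) (at \<theta>)"
    unfolding aug_lagr_def
    by (intro has_derivative_add V_deriv has_derivative_mult_right has_derivative_sum has_derivative_minus
        has_derivative_const)
  then show ?thesis
    unfolding M_def[symmetric] by (rule has_derivative_eq_rhs) (simp add: fun_eq_iff sum_distrib_left sum_negf)
qed

theorem proposition1:
  fixes P :: "'s::finite \<Rightarrow> 'a::finite \<Rightarrow> 's \<Rightarrow> real"
    and \<rho> :: "'s \<Rightarrow> real" and \<gamma> :: real
    and r :: "'s \<Rightarrow> 'a \<Rightarrow> real" and m :: nat
    and c :: "nat \<Rightarrow> 's \<Rightarrow> 'a \<Rightarrow> real" and b :: "nat \<Rightarrow> real"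
    and lam :: "nat \<Rightarrow> real" and \<beta> :: real
    and pol :: "'p::euclidean_space \<Rightarrow> 's \<Rightarrow> 'a \<Rightarrow> real"
    and D :: "'p \<Rightarrow> 's \<Rightarrow> 'a \<Rightarrow> 'p \<Rightarrow> real"
  assumes "is_kernel P" and "is_distr \<rho>"
    and "0 \<le> \<gamma>" and "\<gamma> < 1"
    and "\<forall>s a. 0 \<le> r s a \<and> r s a \<le> 1"
    and "\<forall>i<m. \<forall>s a. 0 \<le> c i s a \<and> c i s a \<le> 1"
    and "\<forall>i<m. 0 \<le> b i"
    and "\<beta> > 0"
    and "\<forall>\<theta>. is_policy (pol \<theta>)"
    and "\<forall>\<theta> s a. ((\<lambda>t. pol t s a) has_derivative D \<theta> s a) (at \<theta>)"
  shows "\<forall>\<theta>. ((\<lambda>t. aug_lagr P \<gamma> \<rho> r m c b \<beta> (pol t) lam) has_derivative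
           (\<lambda>h. \<Sum>s\<in>UNIV. visit P \<gamma> \<rho> (pol \<theta>) s / (1 - \<gamma>) *
              (\<Sum>a\<in>UNIV. Qf P \<gamma> (pol \<theta>) (Gam P \<gamma> \<rho> r m c b \<beta> (pol \<theta>) lam) s a * D \<theta> s a h)))
         (at \<theta>)"
proof (intro allI)
  fix \<theta> :: 'p
  have kernel: "is_kernel P" and discount: "0 \<le> \<gamma>" "\<gamma> < 1" and policy: "\<And>t. is_policy (pol t)"
    and pol_deriv: "\<And>s a. ((\<lambda>t. pol t s a) has_derivative D \<theta> s a) (at \<theta>)"
    using assms by auto
  define grad where "grad u h =
    (\<Sum>s\<in>UNIV. visit P \<gamma> \<rho> (pol \<theta>) s / (1 - \<gamma>) * (\<Sum>a\<in>UNIV. Qf P \<gamma> (pol \<theta>) u s a * D \<theta> s a h))" for u h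
  define M where "M i = min (Vrho P \<gamma> \<rho> (pol \<theta>) (c i) - b i - lam i / \<beta>) 0" for i
  have grad_V: "((\<lambda>t. Vrho P \<gamma> \<rho> (pol t) u) has_derivative grad u) (at \<theta>)" for u
    unfolding grad_def by (rule Vrho_has_derivative[OF kernel discount policy pol_deriv])
  have "((\<lambda>t. Vrho P \<gamma> \<rho> (pol t) (Gam P \<gamma> \<rho> r m c b \<beta> (pol \<theta>) lam)) has_derivative
      (\<lambda>h. grad r h - \<beta> * (\<Sum>i<m. M i * grad (c i) h))) (at \<theta>)"
    unfolding Vrho_Gam[OF kernel discount policy] M_def[symmetric]
    by (intro has_derivative_diff has_derivative_mult_right has_derivative_sum grad_V)
  then have "(\<lambda>h. grad r h - \<beta> * (\<Sum>i<m. M i * grad (c i) h)) = grad (Gam P \<gamma> \<rho> r m c b \<beta> (pol \<theta>) lam)"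
    using grad_V by (rule has_derivative_unique)
  moreover have "((\<lambda>t. aug_lagr P \<gamma> \<rho> r m c b \<beta> (pol t) lam) has_derivative
      (\<lambda>h. grad r h - \<beta> * (\<Sum>i<m. M i * grad (c i) h))) (at \<theta>)"
    unfolding M_def by (rule aug_lagr_has_derivative[OF grad_V])
  ultimately show "((\<lambda>t. aug_lagr P \<gamma> \<rho> r m c b \<beta> (pol t) lam) has_derivative
      grad (Gam P \<gamma> \<rho> r m c b \<beta> (pol \<theta>) lam)) (at \<theta>)"
    by simp
qed

end
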